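(* Let $\Omega$ be a topological space and let $X$ be a locally convex topological vector space whose topology is given by a family $\mathfrak{A}$ of seminorms. Let $V \subset F(\Omega, \mathbb{R}_+)$, $A \subset C(\Omega, \mathbb{C})$, $W \subset F(\Omega, X)$ and $f \in F(\Omega, X)$. Assume $A$ is a multiplier of $W$ and that $f - g \in FV_{b}(\Omega, X)$ for every $g \in W$. Then for each $p \in \mathfrak{A}$ and $v \in V$ there is an $(A, v)$-antisymmetric $z$-filter $\mathcal{F}$ on $\Omega$ such that \[ \inf_{F \in \mathcal{F}} d_{v, p, F}(f, W) = d_{v, p, \Omega}(f, W). \] Moreover, $\mathcal{F}$ can be chosen maximal in the following sense: if $\mathcal{E}$ is a $z$-filter on $\Omega$ with $\mathcal{F} \subset \mathcal{E}$ and $\inf_{E \in \mathcal{E}} d_{v, p, E}(f, W) = d_{v, p, \Omega}(f, W)$, then $\mathcal{E} = \mathcal{F}$.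
   Context: Topological spaces are not assumed Hausdorff. $F(\Omega,X)$ denotes all functions $\Omega\to X$, $\mathbb{R}_+=[0,\infty)$. For $p\in\mathfrak{A}$, $v\in F(\Omega,\mathbb{R}_+)$, $f\in F(\Omega,X)$, $F\subset\Omega$: $|f|_{v,p,F}=\sup\{v(x)p(f(x)):x\in F\}$, and for $W\subset F(\Omega,X)$, $d_{v,p,F}(f,W)=\inf\{|f-g|_{v,p,F}:g\in W\}$. $FV_b(\Omega,X)=\{f\in F(\Omega,X): \sup_{x\in\Omega}v(x)p(f(x))<\infty \text{ for all } v\in V,\ p\in\mathfrak{A}\}$. A zero-set of $\Omega$ is a set $h^{-1}(0)$ with $h\in C(\Omega,\mathbb{R})$; $Z(\Omega)$ is the set of zero-sets. A $z$-filter on $\Omega$ is a nonempty $\mathcal{F}\subset Z(\Omega)$ with $\emptyset\notin\mathcal{F}$, closed under finite intersections, and such that $Z\in\mathcal{F}$, $Z'\in Z(\Omega)$, $Z\subset Z'$ imply $Z'\in\mathcal{F}$. For $v\in F(\Omega,\mathbb{R}_+)$, $\mathrm{supp}\, v$ is the closure of $\{x:v(x)\neq 0\}$. A $z$-filter $\mathcal{F}$ is $(A,v)$-antisymmetric if every $F\in\mathcal{F}$ meets $\mathrm{supp}\,v$ and, for each $\phi\in A$ with $\bigcap_{F\in\mathcal{F}}\overline{\phi(F\cap\mathrm{supp}\,v)}\subset[0,1]$ (closures taken in the one-point compactification $\mathbb{C}\cup\{\infty\}$), this intersection is a single point. A function $\varphi\in F(\Omega,\mathbb{C})$ is a multiplier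 of $W$ if $\varphi f+(1-\varphi)g\in W$ for all $f,g\in W$; $A$ is a multiplier of $W$ if each $\varphi\in A$ is. *)

theory Defs
  imports "HOL-Analysis.Analysis"
begin

definition seminorm :: "(complex \<Rightarrow> 'b::ab_group_add \<Rightarrow> 'b) \<Rightarrow> ('b \<Rightarrow> real) \<Rightarrow> bool" where
  "seminorm smul p \<longleftrightarrow> (\<forall>x. 0 \<le> p x) \<and> (\<forall>x y. p (x + y) \<le> p x + p y)
     \<and> (\<forall>c x. p (smul c x) = cmod c * p x)"

text \<open>The one-point compactification of the complex plane, with None as the point at infinity.\<close>
definition ext_plane :: "complex option topology" where
  "ext_plane = topology (\<lambda>U. open (Some -` U) \<and> (None \<in> U \<longrightarrow> compact (- (Some -` U))))"

lemma istopology_ext_plane: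
  "istopology (\<lambda>U::complex option set. open (Some -` U) \<and> (None \<in> U \<longrightarrow> compact (- (Some -` U))))"
  unfolding istopology_def
proof (rule conjI; intro allI impI)
  fix S T :: "complex option set"
  assume S: "open (Some -` S) \<and> (None \<in> S \<longrightarrow> compact (- (Some -` S)))"
     and T: "open (Some -` T) \<and> (None \<in> T \<longrightarrow> compact (- (Some -` T)))"
  show "open (Some -` (S \<inter> T)) \<and> (None \<in> S \<inter> T \<longrightarrow> compact (- (Some -` (S \<inter> T))))"
  proof
    show "open (Some -` (S \<inter> T))" using S T by (simp add: vimage_Int open_Int)
    show "None \<in> S \<inter> T \<longrightarrow> compact (- (Some -` (S \<inter> T)))"
    proof
      assume "None \<in> S \<inter> T"
      then have "compact (- (Some -` S))" "compact (- (Some -` T))" using S T by auto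
      then have "compact (- (Some -` S) \<union> - (Some -` T))" by (rule compact_Un)
      then show "compact (- (Some -` (S \<inter> T)))" by (simp add: vimage_Int)
    qed
  qed
next
  fix K :: "complex option set set"
  assume K: "\<forall>U\<in>K. open (Some -` U) \<and> (None \<in> U \<longrightarrow> compact (- (Some -` U)))"
  have o: "open (Some -` \<Union>K)" using K by (auto simp: vimage_Union)
  moreover have "None \<in> \<Union>K \<longrightarrow> compact (- (Some -` \<Union>K))"
  proof
    assume "None \<in> \<Union>K"
    then obtain U where U: "U \<in> K" "None \<in> U" by blast
    then have c: "compact (- (Some -` U))" using K by blast
    have "- (Some -` \<Union>K) \<subseteq> - (Some -` U)" using U by auto
    moreover have "closed (- (Some -` \<Union>K))" using o by (simp add: closed_def)
    ultimately show "compact (- (Some -` \<Union>K))" using c compact_Int_closed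
      by (metis inf.absorb_iff2)
  qed
  ultimately show "open (Some -` \<Union>K) \<and> (None \<in> \<Union>K \<longrightarrow> compact (- (Some -` \<Union>K)))" by blast
qed

definition wsup :: "('a \<Rightarrow> real) \<Rightarrow> ('b \<Rightarrow> real) \<Rightarrow> 'a set \<Rightarrow> ('a \<Rightarrow> 'b) \<Rightarrow> ennreal" where
  "wsup v p F f = (SUP x\<in>F. ennreal (v x * p (f x)))"

definition wdist :: "('a \<Rightarrow> real) \<Rightarrow> ('b::ab_group_add \<Rightarrow> real) \<Rightarrow> 'a set \<Rightarrow> ('a \<Rightarrow> 'b) \<Rightarrow> ('a \<Rightarrow> 'b) set \<Rightarrow> ennreal" where
  "wdist v p F f W = (INF g\<in>W. wsup v p F (\<lambda>x. f x - g x))"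

definition FVb :: "('a \<Rightarrow> real) set \<Rightarrow> ('b \<Rightarrow> real) set \<Rightarrow> ('a \<Rightarrow> 'b) set" where
  "FVb V \<A> = {f. \<forall>v\<in>V. \<forall>p\<in>\<A>. bdd_above ((\<lambda>x. v x * p (f x)) ` UNIV)}"

definition zero_sets :: "'a::topological_space set set" where
  "zero_sets = {h -` {0} | h :: 'a \<Rightarrow> real. continuous_on UNIV h}"

definition z_filter :: "'a::topological_space set set \<Rightarrow> bool" where
  "z_filter \<F> \<longleftrightarrow> \<F> \<subseteq> zero_sets \<and> \<F> \<noteq> {} \<and> {} \<notin> \<F>
     \<and> (\<forall>F\<in>\<F>. \<forall>G\<in>\<F>. F \<inter> G \<in> \<F>)
     \<and> (\<forall>Z\<in>\<F>. \<forall>Z'\<in>zero_sets. Z \<subseteq> Z' \<longrightarrow> Z' \<in> \<F>)"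

definition supp :: "('a::topological_space \<Rightarrow> real) \<Rightarrow> 'a set" where
  "supp v = closure {x. v x \<noteq> 0}"

definition antisymmetric_zf :: "('a::topological_space \<Rightarrow> complex) set \<Rightarrow> ('a \<Rightarrow> real) \<Rightarrow> 'a set set \<Rightarrow> bool" where
  "antisymmetric_zf A v \<F> \<longleftrightarrow> z_filter \<F> \<and> (\<forall>F\<in>\<F>. F \<inter> supp v \<noteq> {}) \<and>
     (\<forall>\<phi>\<in>A. let S = (\<Inter>F\<in>\<F>. ext_plane closure_of (Some ` \<phi> ` (F \<inter> supp v)))
             in S \<subseteq> Some ` {z. Im z = 0 \<and> 0 \<le> Re z \<and> Re z \<le> 1} \<longrightarrow> (\<exists>c. S = {c}))"

definition multiplier :: "(complex \<Rightarrow> 'b::ab_group_add \<Rightarrow> 'b) \<Rightarrow> ('a \<Rightarrow> complex) \<Rightarrow> ('a \<Rightarrow> 'b) set \<Rightarrow> bool" where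
  "multiplier smul \<phi> W \<longleftrightarrow> (\<forall>f\<in>W. \<forall>g\<in>W. (\<lambda>x. smul (\<phi> x) (f x) + smul (1 - \<phi> x) (g x)) \<in> W)"

end

(*
  Fix p and v, and let d be the distance from f to W over the whole space.  Among the z-filters
  all of whose members still see distance at least d, Zorn's lemma gives a maximal one (when d = 0
  or W is empty, the z-ultrafilter of a point where v does not vanish will do).  Maximality makes
  it absorb every zero set that meets all its members without lowering the distance.

  Suppose the cluster set of some multiplier phi along this filter lies in [0, 1] but contains
  two points a < b, and pick a < alpha < beta < b.  Then neither {Re phi <= beta} nor
  {alpha <= Re phi} belongs to the filter, so on each of them f can be approximated from W with
  error below d.  Gluing the two approximants with the multiplier (1 - phi^n)^m, which is close to
  1 where Re phi <= alpha and close to 0 where Re phi >= beta, gives an element of W within less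
  than d of f on a member of the filter: a contradiction.
*)

theory Submission
  imports Defs
begin

section \<open>Zero sets and z-filters\<close>

lemma zero_setsI: "continuous_on UNIV (h :: 'a::topological_space \<Rightarrow> real) \<Longrightarrow> h -` {0} \<in> zero_sets"
  unfolding zero_sets_def by blast

lemma zero_setsE:
  assumes "Z \<in> zero_sets"
  obtains h :: "'a::topological_space \<Rightarrow> real" where "continuous_on UNIV h" "Z = h -` {0}"
  using assms unfolding zero_sets_def by blast

lemma zero_sets_UNIV: "UNIV \<in> zero_sets"
  using zero_setsI[of "\<lambda>_. 0"] by simp

lemma zero_sets_Int:
  assumes "Z1 \<in> zero_sets" "Z2 \<in> zero_sets"
  shows "Z1 \<inter> Z2 \<in> zero_sets"
proof -
  obtain h1 h2 :: "'a \<Rightarrow> real"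
    where h: "continuous_on UNIV h1" "Z1 = h1 -` {0}" "continuous_on UNIV h2" "Z2 = h2 -` {0}"
    using assms by (meson zero_setsE)
  then have "(\<lambda>x. \<bar>h1 x\<bar> + \<bar>h2 x\<bar>) -` {0} \<in> zero_sets"
    by (intro zero_setsI continuous_intros)
  also have "(\<lambda>x. \<bar>h1 x\<bar> + \<bar>h2 x\<bar>) -` {0} = Z1 \<inter> Z2"
    using h by (auto simp: add_nonneg_eq_0_iff)
  finally show ?thesis .
qed

lemma zero_sets_le:
  assumes "continuous_on UNIV (g :: 'a::topological_space \<Rightarrow> real)"
  shows "{x. g x \<le> c} \<in> zero_sets"
proof -
  have "(\<lambda>x. max (g x - c) 0) -` {0} \<in> zero_sets"
    using assms by (intro zero_setsI continuous_intros)
  also have "(\<lambda>x. max (g x - c) 0) -` {0} = {x. g x \<le> c}"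
    by (auto simp: max_def split: if_splits)
  finally show ?thesis .
qed

lemma zero_sets_ge:
  assumes "continuous_on UNIV (g :: 'a::topological_space \<Rightarrow> real)"
  shows "{x. c \<le> g x} \<in> zero_sets"
  using zero_sets_le[of "\<lambda>x. - g x" "- c"] assms by (simp add: continuous_on_minus)

lemma zero_sets_eq:
  assumes "continuous_on UNIV (g :: 'a::topological_space \<Rightarrow> real)"
  shows "{x. g x = c} \<in> zero_sets"
proof -
  have "{x. g x = c} = (\<lambda>x. g x - c) -` {0}"
    by auto
  then show ?thesis
    using assms by (simp add: zero_setsI continuous_on_diff)
qed

lemma z_filterI:
  assumes "\<F> \<subseteq> zero_sets" "\<F> \<noteq> {}" "{} \<notin> \<F>"
    and "\<And>F G. F \<in> \<F> \<Longrightarrow> G \<in> \<F> \<Longrightarrow> F \<inter> G \<in> \<F>"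
    and "\<And>Z Z'. Z \<in> \<F> \<Longrightarrow> Z' \<in> zero_sets \<Longrightarrow> Z \<subseteq> Z' \<Longrightarrow> Z' \<in> \<F>"
  shows "z_filter \<F>"
  using assms unfolding z_filter_def by blast

lemma z_filter_subset: "z_filter \<F> \<Longrightarrow> \<F> \<subseteq> zero_sets"
  by (simp add: z_filter_def)

lemma z_filter_nonempty: "z_filter \<F> \<Longrightarrow> \<F> \<noteq> {}"
  by (simp add: z_filter_def)

lemma z_filter_empty_notin: "z_filter \<F> \<Longrightarrow> {} \<notin> \<F>"
  by (simp add: z_filter_def)

lemma z_filter_Int: "z_filter \<F> \<Longrightarrow> F \<in> \<F> \<Longrightarrow> G \<in> \<F> \<Longrightarrow> F \<inter> G \<in> \<F>"
  by (simp add: z_filter_def)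

lemma z_filter_upward:
  "z_filter \<F> \<Longrightarrow> Z \<in> \<F> \<Longrightarrow> Z' \<in> zero_sets \<Longrightarrow> Z \<subseteq> Z' \<Longrightarrow> Z' \<in> \<F>"
  by (simp add: z_filter_def)

lemma z_filter_UNIV: "z_filter \<F> \<Longrightarrow> UNIV \<in> \<F>"
  using z_filter_nonempty z_filter_upward zero_sets_UNIV by blast

lemma z_filter_Inter_finite:
  assumes "z_filter \<F>" "finite \<H>" "\<H> \<subseteq> \<F>"
  shows "\<Inter>\<H> \<in> \<F>"
  using assms(2,3)
  by (induction rule: finite_induct) (auto simp: z_filter_UNIV[OF assms(1)] z_filter_Int[OF assms(1)])

lemma z_filter_Union_chain:
  assumes "\<C> \<noteq> {}" "subset.chain (Collect z_filter) \<C>"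
  shows "z_filter (\<Union>\<C>)"
proof (rule z_filterI)
  have zC: "\<And>\<E>. \<E> \<in> \<C> \<Longrightarrow> z_filter \<E>"
    using assms(2) unfolding subset_chain_def by blast
  then show "\<Union>\<C> \<subseteq> zero_sets" "\<Union>\<C> \<noteq> {}" "{} \<notin> \<Union>\<C>"
    using assms(1) z_filter_subset z_filter_nonempty z_filter_empty_notin by fastforce+
  show "Z' \<in> \<Union>\<C>" if "Z \<in> \<Union>\<C>" "Z' \<in> zero_sets" "Z \<subseteq> Z'" for Z Z'
    using that zC z_filter_upward by blast
  fix F G assume "F \<in> \<Union>\<C>" "G \<in> \<Union>\<C>"
  then obtain E1 E2 where "E1 \<in> \<C>" "E2 \<in> \<C>" "F \<in> E1" "G \<in> E2" by blast
  moreover have "E1 \<subseteq> E2 \<or> E2 \<subseteq> E1"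
    using assms(2) \<open>E1 \<in> \<C>\<close> \<open>E2 \<in> \<C>\<close> unfolding subset_chain_def by blast
  ultimately show "F \<inter> G \<in> \<Union>\<C>"
    using zC z_filter_Int by blast
qed

lemma z_filter_restrict:
  assumes "z_filter \<F>" "Z \<in> zero_sets" "\<forall>F\<in>\<F>. F \<inter> Z \<noteq> {}"
  shows "z_filter {Z'\<in>zero_sets. \<exists>F\<in>\<F>. F \<inter> Z \<subseteq> Z'}"
proof (rule z_filterI)
  show "{Z'\<in>zero_sets. \<exists>F\<in>\<F>. F \<inter> Z \<subseteq> Z'} \<noteq> {}"
    using z_filter_UNIV[OF assms(1)] zero_sets_UNIV by blast
  fix F G assume "F \<in> {Z'\<in>zero_sets. \<exists>F\<in>\<F>. F \<inter> Z \<subseteq> Z'}" "G \<in> {Z'\<in>zero_sets. \<exists>F\<in>\<F>. F \<inter> Z \<subseteq> Z'}"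
  then obtain F1 G1 where "F1 \<in> \<F>" "G1 \<in> \<F>" "F1 \<inter> Z \<subseteq> F" "G1 \<inter> Z \<subseteq> G"
    and "F \<in> zero_sets" "G \<in> zero_sets" by blast
  then show "F \<inter> G \<in> {Z'\<in>zero_sets. \<exists>F\<in>\<F>. F \<inter> Z \<subseteq> Z'}"
    using z_filter_Int[OF assms(1)] zero_sets_Int by blast
qed (use assms(3) in blast)+

section \<open>The extended plane and cluster sets\<close>

lemma openin_ext_plane:
  "openin ext_plane U \<longleftrightarrow> open (Some -` U) \<and> (None \<in> U \<longrightarrow> compact (- (Some -` U)))"
  unfolding ext_plane_def using istopology_ext_plane by simp

lemma topspace_ext_plane [simp]: "topspace ext_plane = UNIV"
  unfolding topspace_def by (auto simp: openin_ext_plane intro!: exI[of _ UNIV])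

lemma openin_ext_plane_Some_image: "open T \<Longrightarrow> openin ext_plane (Some ` T)"
  by (auto simp: openin_ext_plane inj_vimage_image_eq)

lemma closedin_ext_plane_Some_image: "compact C \<Longrightarrow> closedin ext_plane (Some ` C)"
proof -
  assume "compact C"
  moreover have "Some -` (UNIV - Some ` C) = - C"
    by auto
  ultimately show ?thesis
    by (simp add: closedin_def openin_ext_plane compact_imp_closed open_Compl)
qed

lemma compact_space_ext_plane: "compact_space ext_plane"
  unfolding compact_space_alt
proof (intro allI impI)
  fix \<U> :: "complex option set set"
  assume "(\<forall>U\<in>\<U>. openin ext_plane U) \<and> topspace ext_plane \<subseteq> \<Union>\<U>"
  then have opens: "\<And>U. U \<in> \<U> \<Longrightarrow> openin ext_plane U" and cover: "\<And>c. \<exists>U\<in>\<U>. c \<in> U"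
    by auto
  obtain U0 where U0: "U0 \<in> \<U>" "None \<in> U0"
    using cover by blast
  have "compact (- (Some -` U0))"
    using opens[OF U0(1)] U0(2) by (simp add: openin_ext_plane)
  moreover have "- (Some -` U0) \<subseteq> \<Union>((-`) Some ` \<U>)"
    using cover by blast
  moreover have "\<And>B. B \<in> (-`) Some ` \<U> \<Longrightarrow> open B"
    using opens by (auto simp: openin_ext_plane)
  ultimately obtain \<T> where \<T>: "\<T> \<subseteq> (-`) Some ` \<U>" "finite \<T>" "- (Some -` U0) \<subseteq> \<Union>\<T>"
    by (rule compactE)
  then obtain \<V> where \<V>: "\<V> \<subseteq> \<U>" "finite \<V>" "\<T> = (-`) Some ` \<V>"
    using finite_subset_image[OF \<T>(2,1)] by blast
  have "c \<in> \<Union>(insert U0 \<V>)" for c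
    using U0(2) \<T>(3) unfolding \<V>(3) by (cases c) auto
  then show "\<exists>\<F>. finite \<F> \<and> \<F> \<subseteq> \<U> \<and> topspace ext_plane \<subseteq> \<Union>\<F>"
    using U0(1) \<V>(1,2) by (intro exI[of _ "insert U0 \<V>"]) auto
qed

definition cluster_set :: "('a::topological_space \<Rightarrow> complex) \<Rightarrow> 'a set \<Rightarrow> 'a set set \<Rightarrow> complex option set"
  where "cluster_set \<phi> T \<F> = (\<Inter>F\<in>\<F>. ext_plane closure_of (Some ` \<phi> ` (F \<inter> T)))"

lemma cluster_set_meets_open:
  assumes "Some w \<in> cluster_set \<phi> T \<F>" "F \<in> \<F>" "open U" "w \<in> U"
  shows "\<phi> ` (F \<inter> T) \<inter> U \<noteq> {}"
proof -
  have "Some w \<in> ext_plane closure_of (Some ` \<phi> ` (F \<inter> T))"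
    using assms(1,2) unfolding cluster_set_def by blast
  then show ?thesis
    using assms(4) openin_ext_plane_Some_image[OF assms(3)] unfolding in_closure_of by blast
qed

lemma cluster_set_subset_openE:
  assumes \<F>: "z_filter \<F>" and U: "openin ext_plane U" and sub: "cluster_set \<phi> T \<F> \<subseteq> U"
  obtains F where "F \<in> \<F>" "Some ` \<phi> ` (F \<inter> T) \<subseteq> U"
proof -
  define G where "G F = Some ` \<phi> ` (F \<inter> T)" for F
  have mono: "G F \<subseteq> G F'" if "F \<subseteq> F'" for F F'
    using that unfolding G_def by blast
  define \<C> where "\<C> = (\<lambda>F. ext_plane closure_of G F - U) ` \<F>"
  have closed: "\<forall>C\<in>\<C>. closedin ext_plane C"
    using U unfolding \<C>_def by auto
  have "\<Inter>\<C> = (\<Inter>F\<in>\<F>. ext_plane closure_of G F) - U"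
    using z_filter_nonempty[OF \<F>] unfolding \<C>_def by auto
  then have "\<Inter>\<C> = {}"
    using sub unfolding cluster_set_def G_def by blast
  moreover have "(\<forall>C\<in>\<C>. closedin ext_plane C) \<and> (\<forall>\<H>. finite \<H> \<and> \<H> \<subseteq> \<C> \<longrightarrow> \<Inter>\<H> \<noteq> {})
      \<longrightarrow> \<Inter>\<C> \<noteq> {}"
    using compact_space_ext_plane unfolding compact_space_fip by (rule spec)
  ultimately have "\<not> (\<forall>\<H>. finite \<H> \<and> \<H> \<subseteq> \<C> \<longrightarrow> \<Inter>\<H> \<noteq> {})"
    using closed by blast
  then obtain \<H> where \<H>: "finite \<H>" "\<H> \<subseteq> \<C>" "\<Inter>\<H> = {}"
    by blast
  obtain H where H: "H \<subseteq> \<F>" "finite H" "\<H> = (\<lambda>F. ext_plane closure_of G F - U) ` H"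
    using finite_subset_image[OF \<H>(1) \<H>(2)[unfolded \<C>_def]] by blast
  have "ext_plane closure_of G (\<Inter>H) - U \<subseteq> \<Inter>\<H>"
    unfolding H(3)
  proof (rule INF_greatest)
    fix F assume "F \<in> H"
    then show "ext_plane closure_of G (\<Inter>H) - U \<subseteq> ext_plane closure_of G F - U"
      by (intro Diff_mono closure_of_mono mono) auto
  qed
  then have "G (\<Inter>H) \<subseteq> U"
    using \<H>(3) closure_of_subset[of "G (\<Inter>H)" ext_plane] by auto
  then show ?thesis
    using that z_filter_Inter_finite[OF \<F> H(2,1)] unfolding G_def by blast
qed

lemma cluster_set_nonempty:
  assumes "z_filter \<F>" "\<forall>F\<in>\<F>. F \<inter> T \<noteq> {}"
  shows "cluster_set \<phi> T \<F> \<noteq> {}"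
proof
  assume "cluster_set \<phi> T \<F> = {}"
  then obtain F where "F \<in> \<F>" "Some ` \<phi> ` (F \<inter> T) \<subseteq> {}"
    using cluster_set_subset_openE[OF assms(1) openin_empty] by blast
  then show False
    using assms(2) by blast
qed

lemma cluster_set_near_unit_interval:
  assumes "z_filter \<F>" "cluster_set \<phi> T \<F> \<subseteq> (\<lambda>t. Some (of_real t)) ` {0..1}" "0 < \<epsilon>"
  obtains F where "F \<in> \<F>" "\<And>x. x \<in> F \<Longrightarrow> x \<in> T \<Longrightarrow> \<exists>t\<in>{0..1}. cmod (\<phi> x - of_real t) < \<epsilon>"
proof -
  define N where "N = (\<Union>t\<in>{0..1}. ball (complex_of_real t) \<epsilon>)"
  have "of_real t \<in> N" if "t \<in> {0..1}" for t
    unfolding N_def using that \<open>0 < \<epsilon>\<close> by (intro UN_I[of t]) auto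
  then have "(\<lambda>t. Some (of_real t)) ` {0..1} \<subseteq> Some ` N"
    by blast
  with assms(2) have "cluster_set \<phi> T \<F> \<subseteq> Some ` N"
    by (rule order.trans)
  moreover have "open N"
    unfolding N_def by auto
  ultimately obtain F where "F \<in> \<F>" and F: "Some ` \<phi> ` (F \<inter> T) \<subseteq> Some ` N"
    using cluster_set_subset_openE[OF assms(1) openin_ext_plane_Some_image] by blast
  have "\<exists>t\<in>{0..1}. cmod (\<phi> x - of_real t) < \<epsilon>" if "x \<in> F" "x \<in> T" for x
  proof -
    have "Some (\<phi> x) \<in> Some ` N"
      using that by (intro subsetD[OF F]) auto
    then have "\<phi> x \<in> N"
      by (simp add: inj_image_mem_iff)
    then obtain t where "t \<in> {0..1}" "dist (of_real t) (\<phi> x) < \<epsilon>"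
      unfolding N_def by auto
    then show ?thesis
      by (metis dist_commute dist_norm)
  qed
  with \<open>F \<in> \<F>\<close> show ?thesis
    using that by blast
qed

section \<open>Fixed and maximal z-filters\<close>

definition fixed_z_filter :: "'a::topological_space \<Rightarrow> 'a set set" where
  "fixed_z_filter x0 = {Z \<in> zero_sets. x0 \<in> Z}"

lemma z_filter_fixed_z_filter: "z_filter (fixed_z_filter x0)"
  unfolding fixed_z_filter_def by (rule z_filterI) (use zero_sets_UNIV zero_sets_Int in auto)

lemma fixed_z_filter_maximal:
  assumes \<E>: "z_filter \<E>" and sub: "fixed_z_filter x0 \<subseteq> \<E>"
  shows "\<E> = fixed_z_filter x0"
proof
  show "\<E> \<subseteq> fixed_z_filter x0"
  proof
    fix Z assume "Z \<in> \<E>"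
    then obtain h :: "'a \<Rightarrow> real" where h: "continuous_on UNIV h" "Z = h -` {0}"
      using z_filter_subset[OF \<E>] zero_setsE by blast
    have "{x. h x = h x0} \<in> \<E>"
      using sub zero_sets_eq[OF h(1)] unfolding fixed_z_filter_def by blast
    then have "Z \<inter> {x. h x = h x0} \<in> \<E>"
      by (rule z_filter_Int[OF \<E> \<open>Z \<in> \<E>\<close>])
    then have "Z \<inter> {x. h x = h x0} \<noteq> {}"
      using z_filter_empty_notin[OF \<E>] by auto
    then have "x0 \<in> Z"
      using h(2) by auto
    then show "Z \<in> fixed_z_filter x0"
      using \<open>Z \<in> \<E>\<close> z_filter_subset[OF \<E>] unfolding fixed_z_filter_def by blast
  qed
qed (rule sub)

lemma fixed_z_filter_cluster:
  assumes \<phi>: "continuous_on UNIV (\<phi> :: 'a::topological_space \<Rightarrow> complex)" and "x0 \<in> T"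
  shows "cluster_set \<phi> T (fixed_z_filter x0) = {Some (\<phi> x0)}"
    (is "?S = _")
proof
  have "Some (\<phi> x0) \<in> ext_plane closure_of (Some ` \<phi> ` (F \<inter> T))" if "F \<in> fixed_z_filter x0" for F
    using that \<open>x0 \<in> T\<close> closure_of_subset[of "Some ` \<phi> ` (F \<inter> T)" ext_plane]
    unfolding fixed_z_filter_def by auto
  then show "{Some (\<phi> x0)} \<subseteq> ?S"
    unfolding cluster_set_def by blast
  have cball: "c \<in> Some ` cball (\<phi> x0) \<rho>" if "c \<in> ?S" "0 < \<rho>" for c \<rho>
  proof -
    have "continuous_on UNIV (\<lambda>x. dist (\<phi> x) (\<phi> x0))"
      using \<phi> by (intro continuous_intros)
    then have "{x. dist (\<phi> x) (\<phi> x0) \<le> \<rho>} \<in> fixed_z_filter x0"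
      using \<open>0 < \<rho>\<close> zero_sets_le unfolding fixed_z_filter_def by auto
    then have "c \<in> ext_plane closure_of (Some ` \<phi> ` ({x. dist (\<phi> x) (\<phi> x0) \<le> \<rho>} \<inter> T))"
      using \<open>c \<in> ?S\<close> unfolding cluster_set_def by blast
    also have "\<dots> \<subseteq> Some ` cball (\<phi> x0) \<rho>"
      by (intro closure_of_minimal closedin_ext_plane_Some_image) (auto simp: dist_commute)
    finally show ?thesis .
  qed
  show "?S \<subseteq> {Some (\<phi> x0)}"
  proof
    fix c assume "c \<in> ?S"
    then obtain w where w: "c = Some w"
      using cball[of c 1] by auto
    have "dist w (\<phi> x0) \<le> 0 + \<rho>" if "0 < \<rho>" for \<rho>
      using cball[OF \<open>c \<in> ?S\<close> that] w by (auto simp: dist_commute)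
    then have "dist w (\<phi> x0) \<le> 0"
      by (rule field_le_epsilon)
    then have "w = \<phi> x0"
      by simp
    then show "c \<in> {Some (\<phi> x0)}"
      using w by simp
  qed
qed

definition maximal_z_filter :: "('a::topological_space set \<Rightarrow> bool) \<Rightarrow> 'a set set \<Rightarrow> bool" where
  "maximal_z_filter P \<M> \<longleftrightarrow> z_filter \<M> \<and> (\<forall>F\<in>\<M>. P F) \<and>
     (\<forall>\<E>. z_filter \<E> \<and> \<M> \<subseteq> \<E> \<and> (\<forall>F\<in>\<E>. P F) \<longrightarrow> \<E> = \<M>)"

lemma maximal_z_filter_exists:
  assumes "P UNIV"
  obtains \<M> where "maximal_z_filter P \<M>"
proof -
  define \<Z> where "\<Z> = {\<E>. z_filter \<E> \<and> (\<forall>F\<in>\<E>. P F)}"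
  have "z_filter {UNIV}"
    by (rule z_filterI) (use zero_sets_UNIV in auto)
  then have "{UNIV} \<in> \<Z>"
    using assms unfolding \<Z>_def by blast
  moreover have "\<Union>\<C> \<in> \<Z>" if "\<C> \<noteq> {}" "subset.chain \<Z> \<C>" for \<C>
  proof -
    have "subset.chain (Collect z_filter) \<C>"
      using that(2) unfolding subset_chain_def \<Z>_def by blast
    then have "z_filter (\<Union>\<C>)"
      by (rule z_filter_Union_chain[OF that(1)])
    moreover have "\<forall>F\<in>\<Union>\<C>. P F"
      using that(2) unfolding subset_chain_def \<Z>_def by blast
    ultimately show ?thesis
      unfolding \<Z>_def by blast
  qed
  ultimately obtain \<M> where "\<M> \<in> \<Z>" "\<forall>\<E>\<in>\<Z>. \<M> \<subseteq> \<E> \<longrightarrow> \<E> = \<M>"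
    using subset_Zorn_nonempty[of \<Z>] by auto
  then have "maximal_z_filter P \<M>"
    unfolding maximal_z_filter_def \<Z>_def by auto
  then show ?thesis
    by (rule that)
qed

lemma maximal_z_filter_fixed:
  "\<forall>F\<in>fixed_z_filter x0. P F \<Longrightarrow> maximal_z_filter P (fixed_z_filter x0)"
  unfolding maximal_z_filter_def using z_filter_fixed_z_filter fixed_z_filter_maximal by blast

lemma maximal_z_filter_mem:
  assumes "mono P" and \<M>: "maximal_z_filter P \<M>"
    and Z: "Z \<in> zero_sets" "\<forall>F\<in>\<M>. F \<inter> Z \<noteq> {} \<and> P (F \<inter> Z)"
  shows "Z \<in> \<M>"
proof -
  define \<E> where "\<E> = {Z' \<in> zero_sets. \<exists>F\<in>\<M>. F \<inter> Z \<subseteq> Z'}"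
  have zf: "z_filter \<M>"
    using \<M> unfolding maximal_z_filter_def by blast
  then have "z_filter \<E>"
    unfolding \<E>_def using z_filter_restrict Z by blast
  moreover have "\<M> \<subseteq> \<E>"
    unfolding \<E>_def using z_filter_subset[OF zf] by blast
  moreover have "\<forall>F\<in>\<E>. P F"
    unfolding \<E>_def using Z(2) monoD[OF \<open>mono P\<close>, THEN le_boolD] by blast
  ultimately have "\<E> = \<M>"
    using \<M> unfolding maximal_z_filter_def by blast
  moreover have "Z \<in> \<E>"
    unfolding \<E>_def using Z(1) z_filter_UNIV[OF zf] by blast
  ultimately show ?thesis
    by simp
qed

lemma maximal_z_filter_cover:
  assumes "mono P" and \<M>: "maximal_z_filter P \<M>"
    and Z: "Z1 \<in> zero_sets" "Z2 \<in> zero_sets" "Z1 \<union> Z2 = UNIV" "Z1 \<notin> \<M>" "Z2 \<notin> \<M>"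
  obtains F where "F \<in> \<M>" "\<not> P (F \<inter> Z1)"
proof -
  have zf: "z_filter \<M>"
    using \<M> unfolding maximal_z_filter_def by blast
  have meets: "\<forall>F\<in>\<M>. F \<inter> Z1 \<noteq> {}"
  proof (intro ballI)
    fix F assume "F \<in> \<M>"
    show "F \<inter> Z1 \<noteq> {}"
    proof
      assume "F \<inter> Z1 = {}"
      then have "F \<subseteq> Z2"
        using Z(3) by blast
      then show False
        using z_filter_upward[OF zf \<open>F \<in> \<M>\<close> Z(2)] Z(5) by blast
    qed
  qed
  have "\<not> (\<forall>F\<in>\<M>. P (F \<inter> Z1))"
    using maximal_z_filter_mem[OF \<open>mono P\<close> \<M> Z(1)] meets Z(4) by auto
  then show ?thesis
    using that by blast
qed

section \<open>Seminorms and multipliers\<close>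

lemma seminorm_nonneg: "seminorm smul p \<Longrightarrow> 0 \<le> p x"
  unfolding seminorm_def by blast

lemma seminorm_add_scale_le:
  assumes "seminorm smul p"
  shows "p (smul c x + smul d y) \<le> cmod c * p x + cmod d * p y"
  using assms unfolding seminorm_def by (metis (no_types, lifting))

context
  fixes smul :: "complex \<Rightarrow> 'b::ab_group_add \<Rightarrow> 'b"
  assumes vs: "vector_space smul"
begin

interpretation X: vector_space smul
  by (rule vs)

lemma multiplier_const_one: "multiplier smul (\<lambda>_. 1) W"
  unfolding multiplier_def by simp

lemma multiplier_one_minus: "multiplier smul \<phi> W \<Longrightarrow> multiplier smul (\<lambda>x. 1 - \<phi> x) W"
  unfolding multiplier_def by (simp add: add.commute)

lemma multiplier_mult:
  assumes \<phi>: "multiplier smul \<phi> W" and \<psi>: "multiplier smul \<psi> W"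
  shows "multiplier smul (\<lambda>x. \<phi> x * \<psi> x) W"
  unfolding multiplier_def
proof (intro ballI)
  fix f g assume "f \<in> W" "g \<in> W"
  define h where "h x = smul (\<psi> x) (f x) + smul (1 - \<psi> x) (g x)" for x
  have "h \<in> W"
    using \<psi> \<open>f \<in> W\<close> \<open>g \<in> W\<close> unfolding multiplier_def h_def by blast
  then have "(\<lambda>x. smul (\<phi> x) (h x) + smul (1 - \<phi> x) (g x)) \<in> W"
    using \<phi> \<open>g \<in> W\<close> unfolding multiplier_def by blast
  moreover have "smul (\<phi> x) (h x) + smul (1 - \<phi> x) (g x)
      = smul (\<phi> x * \<psi> x) (f x) + smul (1 - \<phi> x * \<psi> x) (g x)" for x
    unfolding h_def
    by (simp add: X.scale_right_distrib X.scale_left_distrib[symmetric] algebra_simps)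
  ultimately show "(\<lambda>x. smul (\<phi> x * \<psi> x) (f x) + smul (1 - \<phi> x * \<psi> x) (g x)) \<in> W"
    by simp
qed

lemma multiplier_power: "multiplier smul \<phi> W \<Longrightarrow> multiplier smul (\<lambda>x. \<phi> x ^ n) W"
  by (induction n) (simp_all add: multiplier_const_one multiplier_mult)

lemma diff_convex_comb:
  "a - (smul c b1 + smul (1 - c) b2) = smul c (a - b1) + smul (1 - c) (a - b2)"
proof -
  have "a = smul c a + smul (1 - c) a"
    by (simp add: X.scale_left_distrib[symmetric])
  then show ?thesis
    by (simp add: X.scale_right_diff_distrib algebra_simps)
qed

lemma seminorm_convex_comb_bound:
  fixes w \<eta> r M :: real and \<psi> :: complex
  assumes sem: "seminorm smul p" and "0 \<le> w"
    and sum: "cmod \<psi> + cmod (1 - \<psi>) \<le> 1 + \<eta>"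
    and M: "w * p (a - b1) \<le> M" "w * p (a - b2) \<le> M"
    and good: "(w * p (a - b1) \<le> r \<and> cmod (1 - \<psi>) \<le> \<eta>) \<or> (w * p (a - b2) \<le> r \<and> cmod \<psi> \<le> \<eta>)
      \<or> (w * p (a - b1) \<le> r \<and> w * p (a - b2) \<le> r)"
  shows "w * p (a - (smul \<psi> b1 + smul (1 - \<psi>) b2)) \<le> (1 + \<eta>) * r + \<eta> * M"
proof -
  define P1 where "P1 = w * p (a - b1)"
  define P2 where "P2 = w * p (a - b2)"
  have P: "0 \<le> P1" "0 \<le> P2"
    unfolding P1_def P2_def using \<open>0 \<le> w\<close> seminorm_nonneg[OF sem] by simp_all
  have "1 \<le> cmod \<psi> + cmod (1 - \<psi>)"
    using norm_triangle_ineq[of \<psi> "1 - \<psi>"] by simp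
  then have "0 \<le> \<eta>"
    using sum by linarith
  have "w * p (a - (smul \<psi> b1 + smul (1 - \<psi>) b2))
      \<le> w * (cmod \<psi> * p (a - b1) + cmod (1 - \<psi>) * p (a - b2))"
    unfolding diff_convex_comb using seminorm_add_scale_le[OF sem] \<open>0 \<le> w\<close>
    by (simp add: mult_left_mono)
  also have "\<dots> = cmod \<psi> * P1 + cmod (1 - \<psi>) * P2"
    unfolding P1_def P2_def by (simp add: algebra_simps)
  also have "\<dots> \<le> (1 + \<eta>) * r + \<eta> * M"
    using good unfolding P1_def[symmetric] P2_def[symmetric]
  proof (elim disjE conjE)
    assume "P1 \<le> r" "cmod (1 - \<psi>) \<le> \<eta>"
    then show ?thesis
      using P M sum \<open>0 \<le> \<eta>\<close> unfolding P1_def[symmetric] P2_def[symmetric]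
      by (smt (verit, best) mult_mono norm_ge_zero)
  next
    assume "P2 \<le> r" "cmod \<psi> \<le> \<eta>"
    then show ?thesis
      using P M sum \<open>0 \<le> \<eta>\<close> unfolding P1_def[symmetric] P2_def[symmetric]
      by (smt (verit, best) mult_mono norm_ge_zero)
  next
    assume "P1 \<le> r" "P2 \<le> r"
    then have "cmod \<psi> * P1 + cmod (1 - \<psi>) * P2 \<le> (cmod \<psi> + cmod (1 - \<psi>)) * r"
      by (simp add: distrib_right add_mono mult_left_mono)
    also have "\<dots> \<le> (1 + \<eta>) * r"
      using sum P \<open>P1 \<le> r\<close> by (simp add: mult_right_mono)
    finally show ?thesis
      using P M \<open>0 \<le> \<eta>\<close> unfolding P1_def[symmetric] P2_def[symmetric]
      by (smt (verit) mult_nonneg_nonneg)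
  qed
  finally show ?thesis .
qed

end

section \<open>Separating polynomials\<close>

lemma one_minus_power_ge:
  fixes y :: real
  assumes "0 \<le> y" "y \<le> 1"
  shows "1 - (1 - y) ^ m \<le> m * y"
  using Bernoulli_inequality[of "- y" m] assms by simp

lemma one_minus_power_mult_le_one:
  fixes y :: real
  assumes "0 \<le> y" "y \<le> 1"
  shows "(1 - y) ^ m * (1 + m * y) \<le> 1"
proof -
  have "(1 - y) ^ m * (1 + m * y) \<le> (1 - y) ^ m * (1 + y) ^ m"
    using Bernoulli_inequality[of y m] assms by (intro mult_left_mono) auto
  also have "\<dots> = (1 - y\<^sup>2) ^ m"
    by (simp add: power_mult_distrib[symmetric] power2_eq_square algebra_simps)
  also have "\<dots> \<le> 1"
    using assms by (intro power_le_one) (auto simp: power_le_one)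
  finally show ?thesis .
qed

text \<open>Take \<open>n\<close> with \<open>(s/t)^n\<close> small, then \<open>m \<approx> 1 / (\<eta> t^n)\<close>.\<close>

lemma separating_polynomial_real:
  fixes s t \<eta> :: real
  assumes "0 \<le> s" "s < t" "t \<le> 1" "0 < \<eta>"
  obtains n m :: nat
  where "\<And>x. 0 \<le> x \<Longrightarrow> x \<le> s \<Longrightarrow> 1 - (1 - x ^ n) ^ m \<le> \<eta>"
    and "\<And>x. t \<le> x \<Longrightarrow> x \<le> 1 \<Longrightarrow> (1 - x ^ n) ^ m \<le> \<eta>"
proof -
  define q where "q = s / t"
  have "0 < t" "0 \<le> q" "q < 1" "s \<le> q"
    using assms by (auto simp: q_def field_simps mult_left_le)
  have "0 < \<eta>\<^sup>2 / (1 + \<eta>)"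
    using \<open>0 < \<eta>\<close> by simp
  then obtain n where n: "q ^ n < \<eta>\<^sup>2 / (1 + \<eta>)"
    using real_arch_pow_inv[OF _ \<open>q < 1\<close>] by blast
  define m where "m = nat \<lceil>1 / (\<eta> * t ^ n)\<rceil>"
  have tn: "0 < t ^ n" "t ^ n \<le> 1"
    using \<open>0 < t\<close> assms(3) by (auto simp: power_le_one)
  have "1 / (\<eta> * t ^ n) \<le> m"
    unfolding m_def by linarith
  then have m_ge: "1 / \<eta> \<le> m * t ^ n"
    using tn \<open>0 < \<eta>\<close> by (simp add: field_simps)
  have m_le: "m < 1 / (\<eta> * t ^ n) + 1"
    unfolding m_def using tn \<open>0 < \<eta>\<close> by (simp add: of_nat_nat) linarith
  show ?thesis
  proof
    fix x assume "0 \<le> x" "x \<le> s"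
    then have xn: "0 \<le> x ^ n" "x ^ n \<le> 1" "x ^ n \<le> s ^ n" "s ^ n \<le> q ^ n"
      using assms \<open>s \<le> q\<close> by (auto intro: power_mono power_le_one)
    have "1 - (1 - x ^ n) ^ m \<le> m * x ^ n"
      using xn by (intro one_minus_power_ge)
    also have "\<dots> \<le> (1 / (\<eta> * t ^ n) + 1) * s ^ n"
      using xn m_le by (intro mult_mono) auto
    also have "\<dots> = q ^ n / \<eta> + s ^ n"
      using tn \<open>0 < \<eta>\<close> by (simp add: q_def power_divide field_simps)
    also have "\<dots> \<le> q ^ n * (1 + \<eta>) / \<eta>"
      using xn \<open>0 < \<eta>\<close> by (simp add: field_simps)
    also have "\<dots> \<le> \<eta>"
      using n \<open>0 < \<eta>\<close> by (simp add: field_simps power2_eq_square)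
    finally show "1 - (1 - x ^ n) ^ m \<le> \<eta>" .
  next
    fix x assume "t \<le> x" "x \<le> 1"
    then have "t ^ n \<le> x ^ n" "x ^ n \<le> 1"
      using \<open>0 < t\<close> by (auto intro: power_mono power_le_one)
    then have "(1 - x ^ n) ^ m \<le> (1 - t ^ n) ^ m"
      by (intro power_mono) auto
    moreover have "(1 - t ^ n) ^ m \<le> \<eta>"
    proof -
      have nonneg: "0 \<le> (1 - t ^ n) ^ m"
        using tn by simp
      have "(1 - t ^ n) ^ m * (1 + 1 / \<eta>) \<le> (1 - t ^ n) ^ m * (1 + m * t ^ n)"
        using m_ge nonneg by (intro mult_left_mono) auto
      also have "\<dots> \<le> 1"
        using tn by (intro one_minus_power_mult_le_one) auto
      finally have "(1 - t ^ n) ^ m * \<eta> + (1 - t ^ n) ^ m \<le> \<eta>"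
        using \<open>0 < \<eta>\<close> by (simp add: field_simps)
      moreover have "0 \<le> (1 - t ^ n) ^ m * \<eta>"
        using nonneg \<open>0 < \<eta>\<close> by simp
      ultimately show ?thesis
        by linarith
    qed
    ultimately show "(1 - x ^ n) ^ m \<le> \<eta>"
      by linarith
  qed
qed

lemma norm_close_to_real:
  fixes w :: complex
  assumes "cmod (w - of_real r) < e" "0 \<le> r" "r \<le> 1"
  shows "cmod w \<le> r + e" "cmod (1 - w) \<le> 1 - r + e"
proof -
  show "cmod w \<le> r + e"
    using norm_triangle_sub[of w "of_real r"] assms by simp
  have "1 - w = of_real (1 - r) - (w - of_real r)"
    by simp
  then have "cmod (1 - w) \<le> cmod (of_real (1 - r) :: complex) + cmod (w - of_real r)"
    by (metis norm_triangle_ineq4)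
  moreover have "cmod (of_real (1 - r) :: complex) = 1 - r"
    using \<open>r \<le> 1\<close> by (simp only: norm_of_real abs_of_nonneg diff_ge_0_iff_ge)
  ultimately show "cmod (1 - w) \<le> 1 - r + e"
    using assms(1) by linarith
qed

lemma uniformly_close_near_unit_interval:
  fixes Q :: "complex \<Rightarrow> complex"
  assumes "continuous_on UNIV Q" "0 < e"
  obtains \<epsilon> where "0 < \<epsilon>"
    "\<And>z t. t \<in> {0..1} \<Longrightarrow> cmod (z - of_real t) < \<epsilon> \<Longrightarrow> cmod (Q z - Q (of_real t)) < e"
proof -
  have "uniformly_continuous_on (cball 0 2) Q"
    using assms(1) by (intro compact_uniformly_continuous) (auto intro: continuous_on_subset)
  then obtain d where "0 < d"
    and d: "\<And>z w. z \<in> cball 0 2 \<Longrightarrow> w \<in> cball 0 2 \<Longrightarrow> dist w z < d \<Longrightarrow> dist (Q w) (Q z) < e"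
    unfolding uniformly_continuous_on_def using assms(2) by metis
  show ?thesis
  proof (rule that[of "min d 1"])
    show "0 < min d 1"
      using \<open>0 < d\<close> by simp
    fix z t assume "t \<in> {0..1}" "cmod (z - of_real t) < min d 1"
    moreover have "cmod z \<le> cmod (of_real t :: complex) + cmod (z - of_real t)"
      by (rule norm_triangle_sub)
    ultimately show "cmod (Q z - Q (of_real t)) < e"
      using d[of "of_real t" z] by (auto simp: dist_norm)
  qed
qed

lemma separating_polynomial_complex:
  fixes \<alpha> \<beta> \<eta> :: real
  assumes "0 \<le> \<alpha>" "\<alpha> < \<beta>" "\<beta> \<le> 1" "0 < \<eta>"
  obtains n m :: nat and \<epsilon> :: real where "0 < \<epsilon>"
    and "\<And>z t. t \<in> {0..1} \<Longrightarrow> cmod (z - of_real t) < \<epsilon> \<Longrightarrow>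
      cmod ((1 - z ^ n) ^ m) + cmod (1 - (1 - z ^ n) ^ m) \<le> 1 + \<eta>"
    and "\<And>z t. t \<in> {0..1} \<Longrightarrow> cmod (z - of_real t) < \<epsilon> \<Longrightarrow> Re z \<le> \<alpha> \<Longrightarrow>
      cmod (1 - (1 - z ^ n) ^ m) \<le> \<eta>"
    and "\<And>z t. t \<in> {0..1} \<Longrightarrow> cmod (z - of_real t) < \<epsilon> \<Longrightarrow> \<beta> \<le> Re z \<Longrightarrow>
      cmod ((1 - z ^ n) ^ m) \<le> \<eta>"
proof -
  define \<delta> where "\<delta> = (\<beta> - \<alpha>) / 3"
  have \<delta>: "0 < \<delta>" "0 \<le> \<alpha> + \<delta>" "\<alpha> + \<delta> < \<beta> - \<delta>" "\<beta> - \<delta> \<le> 1" "0 < \<eta> / 2"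
    using assms by (auto simp: \<delta>_def field_simps)
  obtain n m :: nat
    where low: "\<And>x. 0 \<le> x \<Longrightarrow> x \<le> \<alpha> + \<delta> \<Longrightarrow> 1 - (1 - x ^ n) ^ m \<le> \<eta> / 2"
      and high: "\<And>x. \<beta> - \<delta> \<le> x \<Longrightarrow> x \<le> 1 \<Longrightarrow> (1 - x ^ n) ^ m \<le> \<eta> / 2"
    by (rule separating_polynomial_real[OF \<delta>(2-5)]) blast
  define Q where "Q z = (1 - z ^ n) ^ m" for z :: complex
  have "continuous_on UNIV Q"
    unfolding Q_def by (intro continuous_intros)
  obtain \<epsilon>' where "0 < \<epsilon>'" and close:
    "\<And>z t. t \<in> {0..1} \<Longrightarrow> cmod (z - of_real t) < \<epsilon>' \<Longrightarrow> cmod (Q z - Q (of_real t)) < \<eta> / 2"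
    by (rule uniformly_close_near_unit_interval[OF \<open>continuous_on UNIV Q\<close> \<delta>(5)]) blast
  define \<epsilon> where "\<epsilon> = min \<epsilon>' \<delta>"
  have near: "cmod (Q z) \<le> (1 - t ^ n) ^ m + \<eta> / 2" "cmod (1 - Q z) \<le> 1 - (1 - t ^ n) ^ m + \<eta> / 2"
    "\<bar>Re z - t\<bar> < \<delta>"
    if "t \<in> {0..1}" "cmod (z - of_real t) < \<epsilon>" for z t
  proof -
    define r where "r = (1 - t ^ n) ^ m"
    have "0 \<le> r" "r \<le> 1"
      using that(1) unfolding r_def by (auto simp: power_le_one)
    have "Q (of_real t) = of_real r"
      unfolding Q_def r_def by simp
    then have close: "cmod (Q z - of_real r) < \<eta> / 2"
      using close[OF that(1)] that(2) unfolding \<epsilon>_def by simp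
    show "cmod (Q z) \<le> (1 - t ^ n) ^ m + \<eta> / 2" "cmod (1 - Q z) \<le> 1 - (1 - t ^ n) ^ m + \<eta> / 2"
      using norm_close_to_real[OF close \<open>0 \<le> r\<close> \<open>r \<le> 1\<close>] unfolding r_def by simp_all
    show "\<bar>Re z - t\<bar> < \<delta>"
      using abs_Re_le_cmod[of "z - of_real t"] that unfolding \<epsilon>_def by simp
  qed
  show ?thesis
  proof (rule that[of \<epsilon>])
    show "0 < \<epsilon>"
      using \<open>0 < \<epsilon>'\<close> \<open>0 < \<delta>\<close> unfolding \<epsilon>_def by simp
    fix z t assume zt: "t \<in> {0..1}" "cmod (z - of_real t) < \<epsilon>"
    show "cmod ((1 - z ^ n) ^ m) + cmod (1 - (1 - z ^ n) ^ m) \<le> 1 + \<eta>"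
      using near[OF zt] unfolding Q_def by linarith
    show "cmod (1 - (1 - z ^ n) ^ m) \<le> \<eta>" if "Re z \<le> \<alpha>"
    proof -
      have "1 - (1 - t ^ n) ^ m \<le> \<eta> / 2"
        using low near(3)[OF zt] zt(1) that by auto
      with near(2)[OF zt] show ?thesis
        unfolding Q_def by linarith
    qed
    show "cmod ((1 - z ^ n) ^ m) \<le> \<eta>" if "\<beta> \<le> Re z"
    proof -
      have "(1 - t ^ n) ^ m \<le> \<eta> / 2"
        using high near(3)[OF zt] zt(1) that by auto
      with near(1)[OF zt] show ?thesis
        unfolding Q_def by linarith
    qed
  qed
qed

section \<open>Weighted distances\<close>

lemma wsup_mono: "F \<subseteq> F' \<Longrightarrow> wsup v p F h \<le> wsup v p F' h"
  unfolding wsup_def by (rule SUP_subset_mono) auto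

lemma wdist_mono: "F \<subseteq> F' \<Longrightarrow> wdist v p F f W \<le> wdist v p F' f W"
  unfolding wdist_def by (intro INF_mono) (auto intro: wsup_mono)

lemma wsup_le: "(\<And>x. x \<in> F \<Longrightarrow> v x * p (h x) \<le> r) \<Longrightarrow> wsup v p F h \<le> ennreal r"
  unfolding wsup_def by (rule SUP_least) (auto intro: ennreal_leI)

lemma wdist_le_wsup: "g \<in> W \<Longrightarrow> wdist v p F f W \<le> wsup v p F (\<lambda>x. f x - g x)"
  unfolding wdist_def by (rule INF_lower)

lemma wdist_less_ennrealE:
  assumes "wdist v p F f W < ennreal d"
  obtains g r where "g \<in> W" "0 \<le> r" "r < d" "\<And>x. x \<in> F \<Longrightarrow> v x * p (f x - g x) \<le> r"
proof -
  obtain g where "g \<in> W" and g: "wsup v p F (\<lambda>x. f x - g x) < ennreal d"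
    using assms unfolding wdist_def INF_less_iff by blast
  define r where "r = enn2real (wsup v p F (\<lambda>x. f x - g x))"
  have "wsup v p F (\<lambda>x. f x - g x) < top"
    using g by (rule less_le_trans) simp
  then have r: "wsup v p F (\<lambda>x. f x - g x) = ennreal r"
    unfolding r_def by simp
  have "0 \<le> r"
    unfolding r_def by simp
  moreover have "r < d"
    using g \<open>0 \<le> r\<close> unfolding r by (simp add: ennreal_less_iff)
  moreover have "v x * p (f x - g x) \<le> r" if "x \<in> F" for x
  proof -
    have "ennreal (v x * p (f x - g x)) \<le> ennreal r"
      unfolding r[symmetric] wsup_def using that by (rule SUP_upper)
    then show ?thesis
      using \<open>0 \<le> r\<close> by (simp add: ennreal_le_iff)
  qed
  ultimately show ?thesis
    using that \<open>g \<in> W\<close> by blast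
qed

lemma mem_supp: "v x \<noteq> 0 \<Longrightarrow> x \<in> supp v"
  unfolding supp_def by (intro closure_subset[THEN subsetD]) simp

lemma wdist_eq_0_outside_supp:
  assumes "W \<noteq> {}" "F \<inter> supp v = {}"
  shows "wdist v p F f W = 0"
proof -
  obtain g where "g \<in> W"
    using assms(1) by blast
  have "v x = 0" if "x \<in> F" for x
    using that assms(2) mem_supp by blast
  then have "wsup v p F (\<lambda>x. f x - g x) \<le> ennreal 0"
    by (intro wsup_le) simp
  then show ?thesis
    using wdist_le_wsup[OF \<open>g \<in> W\<close>, of v p F f] by simp
qed

lemma z_filter_INF_wdist_eq_iff:
  assumes "z_filter \<E>"
  shows "(INF E\<in>\<E>. wdist v p E f W) = wdist v p UNIV f W \<longleftrightarrow>
    (\<forall>E\<in>\<E>. wdist v p UNIV f W \<le> wdist v p E f W)"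
proof
  assume eq: "(INF E\<in>\<E>. wdist v p E f W) = wdist v p UNIV f W"
  show "\<forall>E\<in>\<E>. wdist v p UNIV f W \<le> wdist v p E f W"
  proof
    fix E assume "E \<in> \<E>"
    then show "wdist v p UNIV f W \<le> wdist v p E f W"
      using INF_lower[of E \<E> "\<lambda>E. wdist v p E f W"] eq by simp
  qed
next
  assume "\<forall>E\<in>\<E>. wdist v p UNIV f W \<le> wdist v p E f W"
  then have "wdist v p UNIV f W \<le> (INF E\<in>\<E>. wdist v p E f W)"
    by (intro INF_greatest) blast
  moreover have "(INF E\<in>\<E>. wdist v p E f W) \<le> wdist v p UNIV f W"
    by (rule INF_lower[OF z_filter_UNIV[OF assms]])
  ultimately show "(INF E\<in>\<E>. wdist v p E f W) = wdist v p UNIV f W"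
    by (rule antisym[rotated])
qed

section \<open>Maximal z-filters are antisymmetric\<close>

lemma exists_perturbation_below:
  fixes r d M :: real
  assumes "0 \<le> r" "r < d" "0 \<le> M"
  obtains \<eta> where "0 < \<eta>" "(1 + \<eta>) * r + \<eta> * M < d"
proof -
  define \<eta> where "\<eta> = (d - r) / (r + M + 1)"
  have "0 < \<eta>"
    using assms unfolding \<eta>_def by simp
  have "\<eta> * (r + M) < d - r"
    using assms unfolding \<eta>_def by (simp add: field_simps)
  moreover have "(1 + \<eta>) * r + \<eta> * M = r + \<eta> * (r + M)"
    by (simp add: algebra_simps)
  ultimately show ?thesis
    using that \<open>0 < \<eta>\<close> by simp
qed

lemma patched_approximant:
  fixes smul :: "complex \<Rightarrow> 'b::ab_group_add \<Rightarrow> 'b" and \<phi> :: "'a \<Rightarrow> complex"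
  assumes vs: "vector_space smul" and sem: "seminorm smul p" and v: "\<forall>x. 0 \<le> v x"
    and \<phi>: "multiplier smul \<phi> W" and g12: "g1 \<in> W" "g2 \<in> W"
    and bdd: "bdd_above ((\<lambda>x. v x * p (f x - g1 x)) ` UNIV)" "bdd_above ((\<lambda>x. v x * p (f x - g2 x)) ` UNIV)"
    and \<alpha>\<beta>: "0 \<le> \<alpha>" "\<alpha> < \<beta>" "\<beta> \<le> 1" and r: "0 \<le> r" "r < d"
  obtains \<epsilon> g R where "0 < \<epsilon>" "g \<in> W" "0 \<le> R" "R < d"
    and "\<And>x. \<exists>t\<in>{0..1}. cmod (\<phi> x - of_real t) < \<epsilon> \<Longrightarrow>
      (Re (\<phi> x) \<le> \<beta> \<Longrightarrow> v x * p (f x - g1 x) \<le> r) \<Longrightarrow>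
      (\<alpha> \<le> Re (\<phi> x) \<Longrightarrow> v x * p (f x - g2 x) \<le> r) \<Longrightarrow> v x * p (f x - g x) \<le> R"
proof -
  obtain M1 M2 where M12: "\<And>x. v x * p (f x - g1 x) \<le> M1" "\<And>x. v x * p (f x - g2 x) \<le> M2"
    using bdd unfolding bdd_above_def by auto
  define M where "M = max 0 (max M1 M2)"
  have M: "0 \<le> M" "\<And>x. v x * p (f x - g1 x) \<le> M" "\<And>x. v x * p (f x - g2 x) \<le> M"
    using M12 unfolding M_def by (auto intro: le_max_iff_disj[THEN iffD2])
  obtain \<eta> where "0 < \<eta>" and "(1 + \<eta>) * r + \<eta> * M < d"
    using exists_perturbation_below[OF r M(1)] by blast
  define R where "R = (1 + \<eta>) * r + \<eta> * M"
  have "0 \<le> R" "R < d"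
    using r M \<open>0 < \<eta>\<close> \<open>(1 + \<eta>) * r + \<eta> * M < d\<close> unfolding R_def by simp_all
  obtain n m \<epsilon> where "0 < \<epsilon>"
    and sum: "\<And>z t. t \<in> {0..1} \<Longrightarrow> cmod (z - of_real t) < \<epsilon> \<Longrightarrow>
      cmod ((1 - z ^ n) ^ m) + cmod (1 - (1 - z ^ n) ^ m) \<le> 1 + \<eta>"
    and low: "\<And>z t. t \<in> {0..1} \<Longrightarrow> cmod (z - of_real t) < \<epsilon> \<Longrightarrow> Re z \<le> \<alpha> \<Longrightarrow>
      cmod (1 - (1 - z ^ n) ^ m) \<le> \<eta>"
    and high: "\<And>z t. t \<in> {0..1} \<Longrightarrow> cmod (z - of_real t) < \<epsilon> \<Longrightarrow> \<beta> \<le> Re z \<Longrightarrow>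
      cmod ((1 - z ^ n) ^ m) \<le> \<eta>"
    by (rule separating_polynomial_complex[OF \<alpha>\<beta> \<open>0 < \<eta>\<close>]) blast
  define \<psi> where "\<psi> x = (1 - \<phi> x ^ n) ^ m" for x
  define g where "g x = smul (\<psi> x) (g1 x) + smul (1 - \<psi> x) (g2 x)" for x
  have "multiplier smul \<psi> W"
    unfolding \<psi>_def using vs \<phi> by (intro multiplier_power multiplier_one_minus)
  then have "g \<in> W"
    using g12 unfolding multiplier_def g_def by blast
  show ?thesis
  proof (rule that[OF \<open>0 < \<epsilon>\<close> \<open>g \<in> W\<close> \<open>0 \<le> R\<close> \<open>R < d\<close>])
    fix x
    assume "\<exists>t\<in>{0..1}. cmod (\<phi> x - of_real t) < \<epsilon>"
      and good1: "Re (\<phi> x) \<le> \<beta> \<Longrightarrow> v x * p (f x - g1 x) \<le> r"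
      and good2: "\<alpha> \<le> Re (\<phi> x) \<Longrightarrow> v x * p (f x - g2 x) \<le> r"
    then obtain t where t: "t \<in> {0..1}" "cmod (\<phi> x - of_real t) < \<epsilon>"
      by blast
    have "(v x * p (f x - g1 x) \<le> r \<and> cmod (1 - \<psi> x) \<le> \<eta>) \<or>
        (v x * p (f x - g2 x) \<le> r \<and> cmod (\<psi> x) \<le> \<eta>) \<or>
        (v x * p (f x - g1 x) \<le> r \<and> v x * p (f x - g2 x) \<le> r)"
      unfolding \<psi>_def using low[OF t] high[OF t] good1 good2 \<alpha>\<beta>(2) by fastforce
    then show "v x * p (f x - g x) \<le> R"
      unfolding g_def R_def using sum[OF t] M v
      by (intro seminorm_convex_comb_bound[OF vs sem]) (simp_all add: \<psi>_def)
  qed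
qed

lemma mono_wdist_ge: "mono (\<lambda>F. d \<le> wdist v p F f W)"
proof (rule monoI)
  fix F G :: "'a set"
  assume "F \<subseteq> G"
  then show "(d \<le> wdist v p F f W) \<le> (d \<le> wdist v p G f W)"
    using order.trans[OF _ wdist_mono[of F G v p f W]] by (simp add: le_bool_def)
qed

lemma maximal_z_filter_better_approx:
  assumes \<F>: "maximal_z_filter (\<lambda>F. ennreal d \<le> wdist v p F f W) \<F>"
    and Z: "Z1 \<in> zero_sets" "Z2 \<in> zero_sets" "Z1 \<union> Z2 = UNIV" "Z1 \<notin> \<F>" "Z2 \<notin> \<F>"
  obtains F g r where "F \<in> \<F>" "g \<in> W" "0 \<le> r" "r < d"
    "\<And>x. x \<in> F \<Longrightarrow> x \<in> Z1 \<Longrightarrow> v x * p (f x - g x) \<le> r"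
proof -
  obtain F where "F \<in> \<F>" "wdist v p (F \<inter> Z1) f W < ennreal d"
    using maximal_z_filter_cover[OF mono_wdist_ge \<F> Z] by (auto simp: not_le)
  then show ?thesis
    using that by (auto elim: wdist_less_ennrealE)
qed

lemma maximal_z_filter_halfplane_approximants:
  assumes \<F>: "maximal_z_filter (\<lambda>F. ennreal d \<le> wdist v p F f W) \<F>"
    and \<phi>: "continuous_on UNIV \<phi>"
    and ab: "Some (of_real a) \<in> cluster_set \<phi> (supp v) \<F>" "Some (of_real b) \<in> cluster_set \<phi> (supp v) \<F>"
    and \<alpha>\<beta>: "a < \<alpha>" "\<alpha> < \<beta>" "\<beta> < b"
  obtains F1 F2 g1 g2 r where "F1 \<in> \<F>" "F2 \<in> \<F>" "g1 \<in> W" "g2 \<in> W" "0 \<le> r" "r < d"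
    "\<And>x. x \<in> F1 \<Longrightarrow> Re (\<phi> x) \<le> \<beta> \<Longrightarrow> v x * p (f x - g1 x) \<le> r"
    "\<And>x. x \<in> F2 \<Longrightarrow> \<alpha> \<le> Re (\<phi> x) \<Longrightarrow> v x * p (f x - g2 x) \<le> r"
proof -
  define A1 where "A1 = {x. Re (\<phi> x) \<le> \<beta>}"
  define A2 where "A2 = {x. \<alpha> \<le> Re (\<phi> x)}"
  have "continuous_on UNIV (\<lambda>x. Re (\<phi> x))"
    using \<phi> by (intro continuous_intros)
  then have A: "A1 \<in> zero_sets" "A2 \<in> zero_sets" "A1 \<union> A2 = UNIV" "A2 \<union> A1 = UNIV"
    unfolding A1_def A2_def using \<alpha>\<beta>(2) by (auto intro: zero_sets_le zero_sets_ge)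
  have "A1 \<notin> \<F>"
  proof
    assume "A1 \<in> \<F>"
    then have "\<phi> ` (A1 \<inter> supp v) \<inter> {z. \<beta> < Re z} \<noteq> {}"
      using \<alpha>\<beta> by (intro cluster_set_meets_open[OF ab(2) _ open_halfspace_Re_gt]) auto
    then show False
      unfolding A1_def by auto
  qed
  have "A2 \<notin> \<F>"
  proof
    assume "A2 \<in> \<F>"
    then have "\<phi> ` (A2 \<inter> supp v) \<inter> {z. Re z < \<alpha>} \<noteq> {}"
      using \<alpha>\<beta> by (intro cluster_set_meets_open[OF ab(1) _ open_halfspace_Re_lt]) auto
    then show False
      unfolding A2_def by auto
  qed
  obtain F1 g1 r1 where F1: "F1 \<in> \<F>" "g1 \<in> W" "0 \<le> r1" "r1 < d"
    and good1: "\<And>x. x \<in> F1 \<Longrightarrow> x \<in> A1 \<Longrightarrow> v x * p (f x - g1 x) \<le> r1"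
    by (rule maximal_z_filter_better_approx[OF \<F> A(1-3) \<open>A1 \<notin> \<F>\<close> \<open>A2 \<notin> \<F>\<close>]) blast
  obtain F2 g2 r2 where F2: "F2 \<in> \<F>" "g2 \<in> W" "0 \<le> r2" "r2 < d"
    and good2: "\<And>x. x \<in> F2 \<Longrightarrow> x \<in> A2 \<Longrightarrow> v x * p (f x - g2 x) \<le> r2"
    by (rule maximal_z_filter_better_approx[OF \<F> A(2,1,4) \<open>A2 \<notin> \<F>\<close> \<open>A1 \<notin> \<F>\<close>]) blast
  show ?thesis
  proof (rule that[OF F1(1) F2(1) F1(2) F2(2)])
    show "0 \<le> max r1 r2" "max r1 r2 < d"
      using F1 F2 by auto
    show "v x * p (f x - g1 x) \<le> max r1 r2" if "x \<in> F1" "Re (\<phi> x) \<le> \<beta>" for x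
      using good1[of x] that unfolding A1_def by fastforce
    show "v x * p (f x - g2 x) \<le> max r1 r2" if "x \<in> F2" "\<alpha> \<le> Re (\<phi> x)" for x
      using good2[of x] that unfolding A2_def by fastforce
  qed
qed

lemma maximal_z_filter_not_two_real_cluster_points:
  fixes smul :: "complex \<Rightarrow> 'b::ab_group_add \<Rightarrow> 'b" and \<phi> :: "'a::topological_space \<Rightarrow> complex"
  assumes vs: "vector_space smul" and sem: "seminorm smul p" and v: "\<forall>x. 0 \<le> v x"
    and \<phi>: "continuous_on UNIV \<phi>" "multiplier smul \<phi> W"
    and bdd: "\<forall>g\<in>W. bdd_above ((\<lambda>x. v x * p (f x - g x)) ` UNIV)"
    and \<F>: "maximal_z_filter (\<lambda>F. ennreal d \<le> wdist v p F f W) \<F>"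
    and real: "cluster_set \<phi> (supp v) \<F> \<subseteq> (\<lambda>t. Some (of_real t)) ` {0..1}"
    and ab: "0 \<le> a" "a < b" "b \<le> 1"
      "Some (of_real a) \<in> cluster_set \<phi> (supp v) \<F>" "Some (of_real b) \<in> cluster_set \<phi> (supp v) \<F>"
  shows False
proof -
  have zf: "z_filter \<F>"
    using \<F> unfolding maximal_z_filter_def by blast
  define \<alpha> where "\<alpha> = (2 * a + b) / 3"
  define \<beta> where "\<beta> = (a + 2 * b) / 3"
  have \<alpha>\<beta>: "0 \<le> \<alpha>" "\<alpha> < \<beta>" "\<beta> \<le> 1" "a < \<alpha>" "\<beta> < b"
    using ab unfolding \<alpha>_def \<beta>_def by auto
  obtain F1 F2 g1 g2 r where F12: "F1 \<in> \<F>" "F2 \<in> \<F>" "g1 \<in> W" "g2 \<in> W" "0 \<le> r" "r < d"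
    and good1: "\<And>x. x \<in> F1 \<Longrightarrow> Re (\<phi> x) \<le> \<beta> \<Longrightarrow> v x * p (f x - g1 x) \<le> r"
    and good2: "\<And>x. x \<in> F2 \<Longrightarrow> \<alpha> \<le> Re (\<phi> x) \<Longrightarrow> v x * p (f x - g2 x) \<le> r"
    by (rule maximal_z_filter_halfplane_approximants[OF \<F> \<phi>(1) ab(4,5) \<alpha>\<beta>(4,2,5)]) blast
  obtain \<epsilon> g R where "0 < \<epsilon>" "g \<in> W" "0 \<le> R" "R < d"
    and patched: "\<And>x. \<exists>t\<in>{0..1}. cmod (\<phi> x - of_real t) < \<epsilon> \<Longrightarrow>
      (Re (\<phi> x) \<le> \<beta> \<Longrightarrow> v x * p (f x - g1 x) \<le> r) \<Longrightarrow>
      (\<alpha> \<le> Re (\<phi> x) \<Longrightarrow> v x * p (f x - g2 x) \<le> r) \<Longrightarrow> v x * p (f x - g x) \<le> R"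
    by (rule patched_approximant[OF vs sem v \<phi>(2) F12(3,4) bdd[rule_format, OF F12(3)]
          bdd[rule_format, OF F12(4)] \<alpha>\<beta>(1-3) F12(5,6)]) blast
  obtain F0 where "F0 \<in> \<F>"
    and near: "\<And>x. x \<in> F0 \<Longrightarrow> x \<in> supp v \<Longrightarrow> \<exists>t\<in>{0..1}. cmod (\<phi> x - of_real t) < \<epsilon>"
    by (rule cluster_set_near_unit_interval[OF zf real \<open>0 < \<epsilon>\<close>]) blast
  define F where "F = F0 \<inter> F1 \<inter> F2"
  have "F \<in> \<F>"
    unfolding F_def by (intro z_filter_Int[OF zf] \<open>F0 \<in> \<F>\<close> F12(1,2))
  have "v x * p (f x - g x) \<le> R" if "x \<in> F" for x
  proof (cases "v x = 0")
    case True
    then show ?thesis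
      using \<open>0 \<le> R\<close> by simp
  next
    case False
    then show ?thesis
      using that near[of x] good1[of x] good2[of x] mem_supp[of v x, OF False] unfolding F_def
      by (intro patched) auto
  qed
  then have "wsup v p F (\<lambda>x. f x - g x) \<le> ennreal R"
    by (rule wsup_le)
  also have "\<dots> < ennreal d"
    using \<open>0 \<le> R\<close> \<open>R < d\<close> by (simp add: ennreal_less_iff)
  also have "\<dots> \<le> wdist v p F f W"
    using \<F> \<open>F \<in> \<F>\<close> unfolding maximal_z_filter_def by blast
  also have "\<dots> \<le> wsup v p F (\<lambda>x. f x - g x)"
    by (rule wdist_le_wsup[OF \<open>g \<in> W\<close>])
  finally show False
    by simp
qed

lemma real_unit_interval_eq: "{z. Im z = 0 \<and> 0 \<le> Re z \<and> Re z \<le> 1} = complex_of_real ` {0..1}"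
proof (intro equalityI subsetI)
  fix z assume "z \<in> {z. Im z = 0 \<and> 0 \<le> Re z \<and> Re z \<le> 1}"
  then have "z = of_real (Re z)" "Re z \<in> {0..1}"
    by (auto simp: complex_eq_iff)
  then show "z \<in> complex_of_real ` {0..1}"
    by blast
qed auto

lemma maximal_z_filter_cluster_singleton:
  fixes smul :: "complex \<Rightarrow> 'b::ab_group_add \<Rightarrow> 'b" and \<phi> :: "'a::topological_space \<Rightarrow> complex"
  assumes vs: "vector_space smul" and sem: "seminorm smul p" and v: "\<forall>x. 0 \<le> v x"
    and \<phi>: "continuous_on UNIV \<phi>" "multiplier smul \<phi> W"
    and bdd: "\<forall>g\<in>W. bdd_above ((\<lambda>x. v x * p (f x - g x)) ` UNIV)"
    and \<F>: "maximal_z_filter (\<lambda>F. ennreal d \<le> wdist v p F f W) \<F>"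
    and meets: "\<forall>F\<in>\<F>. F \<inter> supp v \<noteq> {}"
    and real: "cluster_set \<phi> (supp v) \<F> \<subseteq> Some ` {z. Im z = 0 \<and> 0 \<le> Re z \<and> Re z \<le> 1}"
  shows "\<exists>c. cluster_set \<phi> (supp v) \<F> = {c}"
proof (rule ccontr)
  assume not_singleton: "\<nexists>c. cluster_set \<phi> (supp v) \<F> = {c}"
  have zf: "z_filter \<F>"
    using \<F> unfolding maximal_z_filter_def by blast
  have real': "cluster_set \<phi> (supp v) \<F> \<subseteq> (\<lambda>t. Some (of_real t)) ` {0..1}"
    using real unfolding real_unit_interval_eq image_image .
  have "cluster_set \<phi> (supp v) \<F> \<noteq> {}"
    by (rule cluster_set_nonempty[OF zf meets])
  then obtain a where a: "a \<in> {0..1}" "Some (of_real a) \<in> cluster_set \<phi> (supp v) \<F>"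
    using real' by blast
  moreover obtain c where "c \<in> cluster_set \<phi> (supp v) \<F>" "c \<noteq> Some (of_real a)"
    using not_singleton a(2) by blast
  ultimately obtain b where b: "b \<in> {0..1}" "Some (of_real b) \<in> cluster_set \<phi> (supp v) \<F>" "b \<noteq> a"
    using real' by blast
  have two: False
    if "s < t" "s \<in> {0..1}" "t \<in> {0..1}" "Some (of_real s) \<in> cluster_set \<phi> (supp v) \<F>"
      "Some (of_real t) \<in> cluster_set \<phi> (supp v) \<F>" for s t
    using maximal_z_filter_not_two_real_cluster_points[OF vs sem v \<phi> bdd \<F> real' _ that(1)] that by auto
  show False
    using two[of a b] two[of b a] a b by (cases "a < b") auto
qed

lemma antisymmetric_zf_fixed_z_filter:
  assumes "\<forall>\<phi>\<in>A. continuous_on UNIV \<phi>" "x0 \<in> supp v"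
  shows "antisymmetric_zf A v (fixed_z_filter x0)"
  unfolding antisymmetric_zf_def Let_def cluster_set_def[symmetric]
proof (intro conjI ballI impI)
  show "z_filter (fixed_z_filter x0)"
    by (rule z_filter_fixed_z_filter)
  show "F \<inter> supp v \<noteq> {}" if "F \<in> fixed_z_filter x0" for F
    using that assms(2) unfolding fixed_z_filter_def by blast
  show "\<exists>c. cluster_set \<phi> (supp v) (fixed_z_filter x0) = {c}" if "\<phi> \<in> A" for \<phi>
    using fixed_z_filter_cluster[OF _ assms(2)] assms(1) that by blast
qed

lemma antisymmetric_zf_maximal_z_filter:
  fixes smul :: "complex \<Rightarrow> 'b::ab_group_add \<Rightarrow> 'b"
  assumes vs: "vector_space smul" and sem: "seminorm smul p" and v: "\<forall>x. 0 \<le> v x"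
    and A: "\<forall>\<phi>\<in>A. continuous_on UNIV \<phi>" "\<forall>\<phi>\<in>A. multiplier smul \<phi> W"
    and bdd: "\<forall>g\<in>W. bdd_above ((\<lambda>x. v x * p (f x - g x)) ` UNIV)" and "W \<noteq> {}" "0 < d"
    and \<F>: "maximal_z_filter (\<lambda>F. ennreal d \<le> wdist v p F f W) \<F>"
  shows "antisymmetric_zf A v \<F>"
proof -
  have meets: "\<forall>F\<in>\<F>. F \<inter> supp v \<noteq> {}"
  proof (intro ballI notI)
    fix F assume "F \<in> \<F>" "F \<inter> supp v = {}"
    then have "ennreal d \<le> 0"
      using \<F> wdist_eq_0_outside_supp[OF \<open>W \<noteq> {}\<close>, of F v p f] unfolding maximal_z_filter_def
      by auto
    then show False
      using \<open>0 < d\<close> by simp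
  qed
  show ?thesis
    unfolding antisymmetric_zf_def Let_def cluster_set_def[symmetric]
  proof (intro conjI ballI impI)
    show "z_filter \<F>"
      using \<F> unfolding maximal_z_filter_def by blast
    show "F \<inter> supp v \<noteq> {}" if "F \<in> \<F>" for F
      using meets that by blast
    show "\<exists>c. cluster_set \<phi> (supp v) \<F> = {c}"
      if "\<phi> \<in> A" "cluster_set \<phi> (supp v) \<F> \<subseteq> Some ` {z. Im z = 0 \<and> 0 \<le> Re z \<and> Re z \<le> 1}" for \<phi>
      using that A by (intro maximal_z_filter_cluster_singleton[OF vs sem v _ _ bdd \<F> meets]) auto
  qed
qed

lemma exists_maximal_antisymmetric_z_filter:
  fixes smul :: "complex \<Rightarrow> 'b::ab_group_add \<Rightarrow> 'b"
  assumes vs: "vector_space smul" and sem: "seminorm smul p" and v: "\<forall>x. 0 \<le> v x"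
    and A: "\<forall>\<phi>\<in>A. continuous_on UNIV \<phi>" "\<forall>\<phi>\<in>A. multiplier smul \<phi> W"
    and bdd: "\<forall>g\<in>W. bdd_above ((\<lambda>x. v x * p (f x - g x)) ` UNIV)" and "x0 \<in> supp v"
  obtains \<F> where "maximal_z_filter (\<lambda>F. wdist v p UNIV f W \<le> wdist v p F f W) \<F>"
    "antisymmetric_zf A v \<F>"
proof (cases "W = {} \<or> wdist v p UNIV f W = 0")
  case True
  then have "\<forall>F\<in>fixed_z_filter x0. wdist v p UNIV f W \<le> wdist v p F f W"
    by (auto simp: wdist_def)
  then show ?thesis
    by (rule that[OF maximal_z_filter_fixed antisymmetric_zf_fixed_z_filter[OF A(1) \<open>x0 \<in> supp v\<close>]])
next
  case False
  then obtain g where "g \<in> W"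
    by blast
  then obtain M where M: "\<And>x. v x * p (f x - g x) \<le> M"
    using bdd unfolding bdd_above_def by auto
  have "wdist v p UNIV f W \<le> wsup v p UNIV (\<lambda>x. f x - g x)"
    by (rule wdist_le_wsup[OF \<open>g \<in> W\<close>])
  also have "\<dots> \<le> ennreal M"
    by (rule wsup_le) (rule M)
  also have "\<dots> < top"
    by simp
  finally have "wdist v p UNIV f W < top" .
  then obtain d where d: "wdist v p UNIV f W = ennreal d" "0 \<le> d"
    by (cases "wdist v p UNIV f W") auto
  with False have "0 < d"
    by auto
  obtain \<F> where \<F>: "maximal_z_filter (\<lambda>F. ennreal d \<le> wdist v p F f W) \<F>"
    by (rule maximal_z_filter_exists[of "\<lambda>F. ennreal d \<le> wdist v p F f W"]) (use d in simp)
  have "antisymmetric_zf A v \<F>"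
    using False by (intro antisymmetric_zf_maximal_z_filter[OF vs sem v A bdd _ \<open>0 < d\<close> \<F>]) simp
  with \<F> show ?thesis
    by (rule that[unfolded d(1)])
qed

lemma maximal_z_filter_attains_wdist:
  assumes \<F>: "maximal_z_filter (\<lambda>F. wdist v p UNIV f W \<le> wdist v p F f W) \<F>"
  shows "(INF F\<in>\<F>. wdist v p F f W) = wdist v p UNIV f W \<and>
    (\<forall>\<E>. z_filter \<E> \<and> \<F> \<subseteq> \<E> \<and> (INF E\<in>\<E>. wdist v p E f W) = wdist v p UNIV f W \<longrightarrow> \<E> = \<F>)"
proof (intro conjI allI impI)
  have "z_filter \<F>" "\<forall>F\<in>\<F>. wdist v p UNIV f W \<le> wdist v p F f W"
    using \<F> unfolding maximal_z_filter_def by blast+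
  then show "(INF F\<in>\<F>. wdist v p F f W) = wdist v p UNIV f W"
    using z_filter_INF_wdist_eq_iff by blast
  fix \<E> assume "z_filter \<E> \<and> \<F> \<subseteq> \<E> \<and> (INF E\<in>\<E>. wdist v p E f W) = wdist v p UNIV f W"
  then show "\<E> = \<F>"
    using \<F> z_filter_INF_wdist_eq_iff unfolding maximal_z_filter_def by blast
qed

theorem theorem2p7:
  fixes V :: "('a::topological_space \<Rightarrow> real) set"
    and smul :: "complex \<Rightarrow> 'b::ab_group_add \<Rightarrow> 'b"
    and \<A> :: "('b \<Rightarrow> real) set"
    and A :: "('a \<Rightarrow> complex) set"
    and W :: "('a \<Rightarrow> 'b) set"
    and f :: "'a \<Rightarrow> 'b"
  assumes X_vs: "vector_space smul"
    and seminorms: "\<forall>p\<in>\<A>. seminorm smul p"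
    and V_nonneg: "\<forall>v\<in>V. \<forall>x. 0 \<le> v x"
    and A_cont: "\<forall>\<phi>\<in>A. continuous_on UNIV \<phi>"
    and A_mult: "\<forall>\<phi>\<in>A. multiplier smul \<phi> W"
    and f_bdd: "\<forall>g\<in>W. (\<lambda>x. f x - g x) \<in> FVb V \<A>"
  shows "\<forall>p\<in>\<A>. \<forall>v\<in>V. (\<exists>x. v x \<noteq> 0) \<longrightarrow>
           (\<exists>\<F>. antisymmetric_zf A v \<F> \<and>
              (INF F\<in>\<F>. wdist v p F f W) = wdist v p UNIV f W \<and>
              (\<forall>\<E>. z_filter \<E> \<and> \<F> \<subseteq> \<E> \<and> (INF E\<in>\<E>. wdist v p E f W) = wdist v p UNIV f W
                    \<longrightarrow> \<E> = \<F>))"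
proof (intro ballI impI)
  fix p v assume "p \<in> \<A>" "v \<in> V" "\<exists>x. v x \<noteq> 0"
  then obtain x0 where "x0 \<in> supp v"
    using mem_supp by blast
  have bdd: "\<forall>g\<in>W. bdd_above ((\<lambda>x. v x * p (f x - g x)) ` UNIV)"
    using f_bdd \<open>p \<in> \<A>\<close> \<open>v \<in> V\<close> by (auto simp: FVb_def)
  obtain \<F> where \<F>: "maximal_z_filter (\<lambda>F. wdist v p UNIV f W \<le> wdist v p F f W) \<F>"
    and "antisymmetric_zf A v \<F>"
    using exists_maximal_antisymmetric_z_filter[OF X_vs _ _ A_cont A_mult bdd \<open>x0 \<in> supp v\<close>]
      seminorms V_nonneg \<open>p \<in> \<A>\<close> \<open>v \<in> V\<close> by blast
  then show "\<exists>\<F>. antisymmetric_zf A v \<F> \<and>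
              (INF F\<in>\<F>. wdist v p F f W) = wdist v p UNIV f W \<and>
              (\<forall>\<E>. z_filter \<E> \<and> \<F> \<subseteq> \<E> \<and> (INF E\<in>\<E>. wdist v p E f W) = wdist v p UNIV f W
                    \<longrightarrow> \<E> = \<F>)"
    using maximal_z_filter_attains_wdist[OF \<F>] by blast
qed

end
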